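(* Let $N$ be a nontrivial normal subgroup of $G_2$. If $\phi(N)$ is trivial, then $N=K$.
   Context: The $2\times2\times2$ Rubik's cube consists of 8 corner cubelets, each carrying 3 colored stickers. Corner positions are numbered 1 = top-front-left, 2 = top-front-right, 3 = top-back-left, 4 = top-back-right, 5 = bottom-front-left, 6 = bottom-front-right, 7 = bottom-back-left, 8 = bottom-back-right. $G_2$ is the subgroup of the symmetric group on the 24 stickers generated by the six moves $u,d,f,b,l,r$ rotating respectively the top, bottom, front, back, left, right layer of four cubelets by $90^\circ$ clockwise as seen from outside facing that face. $\phi:G_2\to S_8$ records the permutation of corner positions, and $K=\ker\phi$. *)

theory Defs
  imports "HOL-Algebra.Algebra"
begin

datatype face = Up | Dn | Fr | Bk | Lf | Rt

fun cfaces :: "nat \<Rightarrow> face set" where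
  "cfaces c =
    (if c = 1 then {Up, Fr, Lf} else if c = 2 then {Up, Fr, Rt}
     else if c = 3 then {Up, Bk, Lf} else if c = 4 then {Up, Bk, Rt}
     else if c = 5 then {Dn, Fr, Lf} else if c = 6 then {Dn, Fr, Rt}
     else if c = 7 then {Dn, Bk, Lf} else if c = 8 then {Dn, Bk, Rt} else {})"

definition corner_of :: "face set \<Rightarrow> nat" where
  "corner_of A =
    (if A = {Up, Fr, Lf} then 1 else if A = {Up, Fr, Rt} then 2
     else if A = {Up, Bk, Lf} then 3 else if A = {Up, Bk, Rt} then 4
     else if A = {Dn, Fr, Lf} then 5 else if A = {Dn, Fr, Rt} then 6
     else if A = {Dn, Bk, Lf} then 7 else if A = {Dn, Bk, Rt} then 8 else 0)"

text \<open>The 24 stickers: a sticker is (corner position, face it lies on).\<close>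
definition stickers :: "(nat \<times> face) set" where
  "stickers = {(c, f). c \<in> {1..8} \<and> f \<in> cfaces c}"

text \<open>Rotation of the faces of the cube by a clockwise quarter turn about the axis
  through face X, as seen from outside facing X.\<close>
fun frot :: "face \<Rightarrow> face \<Rightarrow> face" where
  "frot Up f = (case f of Fr \<Rightarrow> Lf | Lf \<Rightarrow> Bk | Bk \<Rightarrow> Rt | Rt \<Rightarrow> Fr | g \<Rightarrow> g)"
| "frot Dn f = (case f of Fr \<Rightarrow> Rt | Rt \<Rightarrow> Bk | Bk \<Rightarrow> Lf | Lf \<Rightarrow> Fr | g \<Rightarrow> g)"
| "frot Fr f = (case f of Up \<Rightarrow> Rt | Rt \<Rightarrow> Dn | Dn \<Rightarrow> Lf | Lf \<Rightarrow> Up | g \<Rightarrow> g)"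
| "frot Bk f = (case f of Up \<Rightarrow> Lf | Lf \<Rightarrow> Dn | Dn \<Rightarrow> Rt | Rt \<Rightarrow> Up | g \<Rightarrow> g)"
| "frot Lf f = (case f of Up \<Rightarrow> Fr | Fr \<Rightarrow> Dn | Dn \<Rightarrow> Bk | Bk \<Rightarrow> Up | g \<Rightarrow> g)"
| "frot Rt f = (case f of Up \<Rightarrow> Bk | Bk \<Rightarrow> Dn | Dn \<Rightarrow> Fr | Fr \<Rightarrow> Up | g \<Rightarrow> g)"

definition move :: "face \<Rightarrow> (nat \<times> face \<Rightarrow> nat \<times> face)" where
  "move Y = restrict (\<lambda>(k, s).
      if Y \<in> cfaces k then (corner_of (frot Y ` cfaces k), frot Y s) else (k, s)) stickers"

definition G2 :: "(nat \<times> face \<Rightarrow> nat \<times> face) monoid" where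
  "G2 = subgroup_generated (BijGroup stickers) (move ` UNIV)"

definition S8 :: "(nat \<Rightarrow> nat) monoid" where
  "S8 = BijGroup {1..8}"

text \<open>phi: the induced permutation of corner positions (each corner has exactly one
  Up/Dn sticker, used to track where the cubelet at position c goes).\<close>
definition ud :: "nat \<Rightarrow> face" where
  "ud c = (if c \<le> 4 then Up else Dn)"

definition phi :: "(nat \<times> face \<Rightarrow> nat \<times> face) \<Rightarrow> (nat \<Rightarrow> nat)" where
  "phi g = (\<lambda>c \<in> {1..8}. fst (g (c, ud c)))"

definition K :: "(nat \<times> face \<Rightarrow> nat \<times> face) set" where
  "K = kernel G2 S8 phi"

end

theory Submission
  imports Defs "HOL-Combinatorics.Transposition"
begin

text \<open>Every element of \<open>G\<^sub>2\<close> is described by a permutation \<open>s\<close> of the corner positions and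
  twists \<open>t c \<in> \<int>/3\<close> whose sum is \<open>0\<close>; the kernel \<open>K\<close> consists of the pure twists with twist sum
  \<open>0\<close>. A normal subgroup \<open>N \<subseteq> K\<close> therefore corresponds to a subgroup of \<open>(\<int>/3)\<^sup>8\<close>, and conjugating
  a pure twist by an element with corner permutation \<open>s\<close> permutes its entries by \<open>s\<close>. Short move
  sequences realise the transpositions of adjacent corners along the path 1-2-4-3-7-8-6-5. A
  nontrivial twist in \<open>N\<close> differs at two adjacent corners \<open>a, b\<close>, and \<open>d (t - t \<circ> (a b))\<close> with
  \<open>d = t a - t b\<close> is \<open>\<delta>\<^sub>a - \<delta>\<^sub>b\<close>. These differences propagate along the path and span all twists with
  sum \<open>0\<close>, so \<open>N = K\<close>.\<close>

lemma (in group) inv_eq_nat_pow_ord: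
  assumes "finite (carrier G)" "x \<in> carrier G"
  shows "inv x = x [^] (ord x - 1)"
proof (rule inv_equality)
  have "x [^] (ord x - 1) \<otimes> x = x [^] Suc (ord x - 1)"
    using assms(2) by simp
  also have "\<dots> = x [^] ord x"
    using ord_ge_1[OF assms] by simp
  finally show "x [^] (ord x - 1) \<otimes> x = \<one>"
    using assms(2) by simp
qed (use assms(2) in simp_all)

lemma (in group) inv_closed_if_mult_closed:
  assumes "finite (carrier G)" "x \<in> carrier G" "Q \<one>" "Q x"
    and mult: "\<And>y z. y \<in> carrier G \<Longrightarrow> z \<in> carrier G \<Longrightarrow> Q y \<Longrightarrow> Q z \<Longrightarrow> Q (y \<otimes> z)"
  shows "Q (inv x)"
proof -
  have "Q (x [^] n)" for n :: nat
  proof (induction n)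
    case 0
    then show ?case using assms(3) by simp
  next
    case (Suc n)
    then show ?case using mult[of "x [^] n" x] assms(2,4) by simp
  qed
  then show ?thesis
    using inv_eq_nat_pow_ord[OF assms(1,2)] by simp
qed

lemma adjacent_eq_imp_eq_hd:
  assumes "\<forall>(x, y)\<in>set (zip xs (tl xs)). f x = f y" "a \<in> set xs"
  shows "f a = f (hd xs)"
  using assms
proof (induction xs rule: induct_list012)
  case (3 u v zs)
  then have "f u = f v" "\<forall>(x, y)\<in>set (zip (v # zs) (tl (v # zs))). f x = f y"
    by simp_all
  with 3 show ?case by (cases "a = u") simp_all
qed simp_all

section \<open>Subgroups of \<open>(\<int>/3)\<^sup>n\<close> invariant under adjacent transpositions\<close>

lemma square_mod_3: "(d::nat) mod 3 \<noteq> 0 \<Longrightarrow> d * d mod 3 = 1"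
proof -
  assume "d mod 3 \<noteq> 0"
  then have "d mod 3 = 1 \<or> d mod 3 = 2" by presburger
  moreover have "d * d mod 3 = (d mod 3) * (d mod 3) mod 3"
    by (simp add: mod_mult_eq)
  ultimately show ?thesis by auto
qed

text \<open>The vector \<open>\<delta>\<^sub>a - \<delta>\<^sub>b\<close> over \<open>\<int>/3\<close>, with \<open>-1\<close> represented by \<open>2\<close>.\<close>

definition unit_diff :: "'a \<Rightarrow> 'a \<Rightarrow> 'a \<Rightarrow> nat" where
  "unit_diff a b = (\<lambda>c. if c = a then 1 else if c = b then 2 else 0)"

text \<open>\<open>M\<close> is a subgroup of \<open>(\<int>/3)\<^sup>C\<close>, given by all representatives of its elements.\<close>

locale mod3_module =
  fixes C :: "'a set" and M :: "('a \<Rightarrow> nat) set"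
  assumes zero_mem: "(\<lambda>_. 0) \<in> M"
    and add_mem: "t \<in> M \<Longrightarrow> s \<in> M \<Longrightarrow> (\<lambda>c. t c + s c) \<in> M"
    and mod3_cong_mem: "t \<in> M \<Longrightarrow> (\<And>c. c \<in> C \<Longrightarrow> s c mod 3 = t c mod 3) \<Longrightarrow> s \<in> M"
begin

lemma smult_mem: "t \<in> M \<Longrightarrow> (\<lambda>c. n * t c) \<in> M"
proof (induction n)
  case 0
  then show ?case using zero_mem by simp
next
  case (Suc n)
  then show ?case using add_mem[OF Suc.prems Suc.IH[OF Suc.prems]] by simp
qed

lemma unit_diff_mem:
  assumes swap: "\<And>u. u \<in> M \<Longrightarrow> u \<circ> transpose a b \<in> M"
    and t: "t \<in> M" and differ: "t a mod 3 \<noteq> t b mod 3"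
  shows "unit_diff a b \<in> M"
proof -
  \<comment> \<open>\<open>t - t \<circ> (a b) = d (\<delta>\<^sub>a - \<delta>\<^sub>b)\<close> and \<open>d\<^sup>2 = 1\<close>, so multiplying by \<open>d\<close> isolates \<open>\<delta>\<^sub>a - \<delta>\<^sub>b\<close>\<close>
  define d where "d = t a + 2 * t b"
  have dd: "d * d mod 3 = 1"
    using differ unfolding d_def by (intro square_mod_3) presburger
  have "(\<lambda>c. d * (t c + 2 * (t \<circ> transpose a b) c)) \<in> M"
    using add_mem[OF t smult_mem[OF swap[OF t]]] by (rule smult_mem)
  then show ?thesis
  proof (rule mod3_cong_mem)
    fix c
    have "a \<noteq> b" using differ by auto
    consider "c = a" | "c = b" | "c \<noteq> a" "c \<noteq> b" by blast
    then show "unit_diff a b c mod 3 = d * (t c + 2 * (t \<circ> transpose a b) c) mod 3"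
    proof cases
      case 1
      then show ?thesis using dd by (simp add: unit_diff_def d_def[symmetric])
    next
      case 2
      have "(t b + 2 * t a) mod 3 = 2 * d mod 3"
        unfolding d_def by presburger
      then have "d * (t b + 2 * t a) mod 3 = d * (2 * d) mod 3"
        by (intro mod_mult_cong) simp_all
      also have "\<dots> = 2 * (d * d) mod 3"
        by (simp add: ac_simps)
      also have "\<dots> = 2 * 1 mod 3"
        using dd by (intro mod_mult_cong) simp_all
      finally show ?thesis
        using 2 \<open>a \<noteq> b\<close> by (simp add: unit_diff_def)
    next
      case 3
      then have "d * (t c + 2 * (t \<circ> transpose a b) c) = 3 * (d * t c)"
        by simp
      then show ?thesis
        using 3 by (simp add: unit_diff_def)
    qed
  qed
qed

lemma unit_diff_mem_all_adjacent:
  assumes "distinct xs"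
    and swap: "\<And>a b u. (a, b) \<in> set (zip xs (tl xs)) \<Longrightarrow> u \<in> M \<Longrightarrow> u \<circ> transpose a b \<in> M"
    and "(a, b) \<in> set (zip xs (tl xs))" "unit_diff a b \<in> M"
  shows "\<forall>(p, q)\<in>set (zip xs (tl xs)). unit_diff p q \<in> M"
  using assms
proof (induction xs arbitrary: a b rule: induct_list012)
  case (3 u v zs)
  let ?P = "set (zip (v # zs) (tl (v # zs)))"
  have pairs: "set (zip (u # v # zs) (tl (u # v # zs))) = insert (u, v) ?P"
    by simp
  have swap_uv: "\<And>w. w \<in> M \<Longrightarrow> w \<circ> transpose u v \<in> M"
    using "3.prems"(2) pairs by blast
  have swap_P: "\<And>a b w. (a, b) \<in> ?P \<Longrightarrow> w \<in> M \<Longrightarrow> w \<circ> transpose a b \<in> M"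
    using "3.prems"(2) pairs by blast
  have IH: "\<forall>(p, q)\<in>?P. unit_diff p q \<in> M" if "(a', b') \<in> ?P" "unit_diff a' b' \<in> M" for a' b'
    using "3.IH"(2)[OF _ swap_P that] "3.prems"(1) by simp
  show ?case
  proof (cases zs)
    case Nil
    then show ?thesis using "3.prems"(3,4) by simp
  next
    case (Cons w ws)
    have uvw: "u \<noteq> v" "u \<noteq> w" "v \<noteq> w"
      using "3.prems"(1) Cons by auto
    have vw: "(v, w) \<in> ?P" using Cons by simp
    \<comment> \<open>\<open>\<delta>\<^sub>u - \<delta>\<^sub>v\<close> separates \<open>v\<close> from \<open>w\<close>, and \<open>\<delta>\<^sub>v - \<delta>\<^sub>w\<close> separates \<open>u\<close> from \<open>v\<close>\<close>
    have forward: "unit_diff v w \<in> M" if "unit_diff u v \<in> M"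
      using unit_diff_mem[OF swap_P[OF vw] that] uvw by (simp add: unit_diff_def)
    have backward: "unit_diff u v \<in> M" if "unit_diff v w \<in> M"
      using unit_diff_mem[OF swap_uv that] uvw by (simp add: unit_diff_def)
    have "\<forall>(p, q)\<in>?P. unit_diff p q \<in> M"
    proof (cases "(a, b) = (u, v)")
      case True
      then show ?thesis using IH[OF vw] forward "3.prems"(4) by simp
    next
      case False
      then have "(a, b) \<in> ?P" using "3.prems"(3) pairs by blast
      then show ?thesis using IH "3.prems"(4) by blast
    qed
    then show ?thesis using backward vw pairs by auto
  qed
qed auto

lemma sum_zero_mem_of_adjacent:
  assumes "distinct xs" "set xs \<subseteq> C"
    and "\<forall>(x, y)\<in>set (zip xs (tl xs)). unit_diff x y \<in> M"
    and "\<forall>c\<in>C - set xs. s c mod 3 = 0"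
    and "(\<Sum>c\<in>set xs. s c) mod 3 = 0"
  shows "s \<in> M"
  using assms
proof (induction xs arbitrary: s rule: induct_list012)
  case 1
  then show ?case by (intro mod3_cong_mem[OF zero_mem]) auto
next
  case (2 x)
  have "s c mod 3 = 0" if "c \<in> C" for c
    using 2 that by (cases "c = x") auto
  then show ?case by (intro mod3_cong_mem[OF zero_mem]) simp
next
  case (3 x y zs)
  have xy: "x \<noteq> y" "x \<notin> set zs" "y \<notin> set zs"
    using "3.prems"(1) by auto
  \<comment> \<open>\<open>s = s x (\<delta>\<^sub>x - \<delta>\<^sub>y) + s'\<close>, where \<open>s'\<close> moves the entry at \<open>x\<close> onto \<open>y\<close>\<close>
  define s' where "s' = s(x := 0, y := s y + s x)"
  have "(\<Sum>c\<in>set zs. s' c) = (\<Sum>c\<in>set zs. s c)"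
    using xy by (intro sum.cong) (auto simp: s'_def)
  then have sum_s': "(\<Sum>c\<in>set (y # zs). s' c) = (\<Sum>c\<in>set (x # y # zs). s c)"
    using xy by (simp add: s'_def)
  have "s' \<in> M"
  proof (rule "3.IH"(2))
    show "distinct (y # zs)" "set (y # zs) \<subseteq> C"
      using "3.prems"(1,2) by simp_all
    show "\<forall>(p, q)\<in>set (zip (y # zs) (tl (y # zs))). unit_diff p q \<in> M"
      using "3.prems"(3) by simp
    show "\<forall>c\<in>C - set (y # zs). s' c mod 3 = 0"
      using "3.prems"(4) xy by (auto simp: s'_def)
    show "(\<Sum>c\<in>set (y # zs). s' c) mod 3 = 0"
      using sum_s' "3.prems"(5) by simp
  qed
  moreover have "(\<lambda>c. s x * unit_diff x y c) \<in> M"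
    using "3.prems"(3) by (intro smult_mem) simp
  ultimately have "(\<lambda>c. s x * unit_diff x y c + s' c) \<in> M"
    by (intro add_mem)
  then show ?case
  proof (rule mod3_cong_mem)
    fix c
    consider "c = x" | "c = y" | "c \<noteq> x" "c \<noteq> y" by blast
    then show "s c mod 3 = (s x * unit_diff x y c + s' c) mod 3"
    proof cases
      case 2
      have "(s x * 2 + (s y + s x)) mod 3 = s y mod 3" by presburger
      then show ?thesis using 2 xy by (simp add: s'_def unit_diff_def)
    qed (use xy in \<open>simp_all add: s'_def unit_diff_def\<close>)
  qed
qed

lemma sum_zero_mem_if_nonconstant:
  assumes "distinct xs" "set xs = C"
    and swap: "\<And>a b u. (a, b) \<in> set (zip xs (tl xs)) \<Longrightarrow> u \<in> M \<Longrightarrow> u \<circ> transpose a b \<in> M"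
    and t: "t \<in> M" "a \<in> C" "b \<in> C" "t a mod 3 \<noteq> t b mod 3"
    and "(\<Sum>c\<in>C. s c) mod 3 = 0"
  shows "s \<in> M"
proof -
  have "\<exists>(x, y)\<in>set (zip xs (tl xs)). t x mod 3 \<noteq> t y mod 3"
  proof (rule ccontr)
    assume "\<not> ?thesis"
    then have "\<forall>(x, y)\<in>set (zip xs (tl xs)). t x mod 3 = t y mod 3"
      by auto
    then have "t a mod 3 = t b mod 3"
      using adjacent_eq_imp_eq_hd[of xs "\<lambda>c. t c mod 3"] t(2,3) assms(2) by simp
    with t(4) show False ..
  qed
  then obtain x y where xy: "(x, y) \<in> set (zip xs (tl xs))" "t x mod 3 \<noteq> t y mod 3"
    by auto
  have "unit_diff x y \<in> M"
    using swap[OF xy(1)] t(1) xy(2) by (rule unit_diff_mem)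
  then have "\<forall>(p, q)\<in>set (zip xs (tl xs)). unit_diff p q \<in> M"
    using unit_diff_mem_all_adjacent[OF assms(1) swap xy(1)] by blast
  then show ?thesis
    using sum_zero_mem_of_adjacent[OF assms(1)] assms(2,8) by simp
qed

end

section \<open>Sticker coordinates\<close>

abbreviation Sym :: "(nat \<times> face \<Rightarrow> nat \<times> face) monoid" where
  "Sym \<equiv> BijGroup stickers"

lemma corner_cases:
  "c \<in> {1..8} \<Longrightarrow> c = 1 \<or> c = 2 \<or> c = 3 \<or> c = 4 \<or> c = 5 \<or> c = 6 \<or> c = 7 \<or> c = (8::nat)"
  by auto

lemma Ball_corners:
  "(\<forall>c\<in>{1..8::nat}. P c) \<longleftrightarrow> P 1 \<and> P 2 \<and> P 3 \<and> P 4 \<and> P 5 \<and> P 6 \<and> P 7 \<and> P 8"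
proof
  show "\<forall>c\<in>{1..8}. P c" if "P 1 \<and> P 2 \<and> P 3 \<and> P 4 \<and> P 5 \<and> P 6 \<and> P 7 \<and> P 8"
    using that by (intro ballI) (elim corner_cases[elim_format] disjE; simp)
qed simp

lemma less_3_cases: "k < (3::nat) \<Longrightarrow> k = 0 \<or> k = 1 \<or> k = 2"
  by auto

lemma All_face: "(\<forall>f::face. P f) \<longleftrightarrow> P Up \<and> P Dn \<and> P Fr \<and> P Bk \<and> P Lf \<and> P Rt"
  by (metis face.exhaust)

lemma All_less_3: "(\<forall>k<(3::nat). P k) \<longleftrightarrow> P 0 \<and> P 1 \<and> P 2"
  by (auto dest: less_3_cases)

text \<open>The three faces at each corner, listed in the same rotational sense and starting with the
  \<open>Up\<close>/\<open>Dn\<close> face. A quarter turn moves cubelets rigidly, so it maps the \<open>k\<close>-th sticker of corner \<open>c\<close>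
  to the \<open>(k + t c)\<close>-th sticker of its new position, for a shift \<open>t c\<close> independent of \<open>k\<close>.\<close>

definition corner_cycle :: "nat \<Rightarrow> face list" where
  "corner_cycle c =
    (if c = 1 then [Up, Lf, Fr] else if c = 2 then [Up, Fr, Rt]
     else if c = 3 then [Up, Bk, Lf] else if c = 4 then [Up, Rt, Bk]
     else if c = 5 then [Dn, Fr, Lf] else if c = 6 then [Dn, Rt, Fr]
     else if c = 7 then [Dn, Lf, Bk] else [Dn, Bk, Rt])"

definition sticker :: "nat \<Rightarrow> nat \<Rightarrow> nat \<times> face" where
  "sticker c k = (c, corner_cycle c ! k)"

definition face_index :: "nat \<Rightarrow> face \<Rightarrow> nat" where
  "face_index c f =
    (if f = corner_cycle c ! 0 then 0 else if f = corner_cycle c ! 1 then 1 else 2)"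

lemma corner_cycle:
  assumes "c \<in> {1..8}"
  shows "length (corner_cycle c) = 3" "set (corner_cycle c) = cfaces c" "corner_cycle c ! 0 = ud c"
  using corner_cases[OF assms] by (auto simp: corner_cycle_def ud_def)

lemma sticker_in_stickers: "c \<in> {1..8} \<Longrightarrow> k < 3 \<Longrightarrow> sticker c k \<in> stickers"
  using corner_cycle(1,2)[of c] nth_mem[of k "corner_cycle c"] by (simp add: sticker_def stickers_def)

lemma face_index_corner_cycle: "c \<in> {1..8} \<Longrightarrow> k < 3 \<Longrightarrow> face_index c (corner_cycle c ! k) = k"
  by (drule corner_cases, drule less_3_cases) (auto simp: face_index_def corner_cycle_def)

lemma stickersE:
  assumes "x \<in> stickers"
  obtains c k where "c \<in> {1..8}" "k < 3" "x = sticker c k"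
proof -
  obtain c f where x: "x = (c, f)" "c \<in> {1..8}" "f \<in> cfaces c"
    using assms by (auto simp: stickers_def)
  then obtain k where "k < 3" "f = corner_cycle c ! k"
    using corner_cycle(1,2)[of c] by (metis in_set_conv_nth)
  then show thesis
    using that x by (simp add: sticker_def)
qed

lemma stickers_eqI:
  assumes "f \<in> extensional stickers" "g \<in> extensional stickers"
    and "\<And>c k. c \<in> {1..8} \<Longrightarrow> k < 3 \<Longrightarrow> f (sticker c k) = g (sticker c k)"
  shows "f = g"
proof (rule extensionalityI[OF assms(1,2)])
  fix x
  assume "x \<in> stickers"
  then obtain c k where "c \<in> {1..8}" "k < 3" "x = sticker c k"
    by (rule stickersE)
  then show "f x = g x"
    using assms(3) by simp
qed

lemma finite_stickers: "finite stickers"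
proof -
  have "f \<in> {Up, Dn, Fr, Bk, Lf, Rt}" for f :: face
    by (cases f) simp_all
  then have "stickers \<subseteq> {1..8} \<times> {Up, Dn, Fr, Bk, Lf, Rt}"
    by (auto simp: stickers_def)
  then show ?thesis
    by (rule finite_subset) simp
qed

lemma finite_carrier_Sym: "finite (carrier Sym)"
proof (rule finite_subset)
  show "carrier Sym \<subseteq> stickers \<rightarrow>\<^sub>E stickers"
    by (auto simp: BijGroup_def Bij_def bij_betw_def extensional_def)
  show "finite (stickers \<rightarrow>\<^sub>E stickers)"
    using finite_stickers by (intro finite_PiE)
qed

lemma mult_Sym: "g \<in> carrier Sym \<Longrightarrow> h \<in> carrier Sym \<Longrightarrow> g \<otimes>\<^bsub>Sym\<^esub> h = compose stickers g h"
  by (simp add: BijGroup_def)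

definition has_coords :: "(nat \<times> face \<Rightarrow> nat \<times> face) \<Rightarrow> (nat \<Rightarrow> nat) \<Rightarrow> (nat \<Rightarrow> nat) \<Rightarrow> bool" where
  "has_coords g s t \<longleftrightarrow> bij_betw s {1..8} {1..8} \<and>
     (\<forall>c\<in>{1..8}. \<forall>k<3. g (sticker c k) = sticker (s c) ((k + t c) mod 3))"

lemma has_coords_one: "has_coords \<one>\<^bsub>Sym\<^esub> id (\<lambda>_. 0)"
  by (simp add: has_coords_def BijGroup_def sticker_in_stickers)

lemma has_coords_mult:
  assumes g: "has_coords g sg tg" "g \<in> carrier Sym"
    and h: "has_coords h sh th" "h \<in> carrier Sym"
  shows "has_coords (g \<otimes>\<^bsub>Sym\<^esub> h) (sg \<circ> sh) (\<lambda>c. th c + tg (sh c))"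
  unfolding has_coords_def
proof (intro conjI ballI allI impI)
  show "bij_betw (sg \<circ> sh) {1..8} {1..8}"
    using g h by (auto simp: has_coords_def intro: bij_betw_trans)
  fix c k :: nat
  assume c: "c \<in> {1..8}" and k: "k < 3"
  have "sh c \<in> {1..8}"
    using h c by (auto simp: has_coords_def bij_betw_def)
  moreover have "((k + th c) mod 3 + tg (sh c)) mod 3 = (k + (th c + tg (sh c))) mod 3"
    by presburger
  ultimately show "(g \<otimes>\<^bsub>Sym\<^esub> h) (sticker c k) =
      sticker ((sg \<circ> sh) c) ((k + (th c + tg (sh c))) mod 3)"
    using g h c k by (simp add: mult_Sym compose_eq sticker_in_stickers has_coords_def)
qed

lemma sum_twist_mult:
  fixes th tg sh :: "nat \<Rightarrow> nat"
  assumes "bij_betw sh {1..8} {1..8}"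
  shows "(\<Sum>c\<in>{1..8::nat}. th c + tg (sh c)) = (\<Sum>c\<in>{1..8}. th c) + (\<Sum>c\<in>{1..8}. tg c)"
  using sum.reindex_bij_betw[OF assms, of tg] by (simp add: sum.distrib)

lemma has_coords_image:
  assumes "has_coords g s t"
  shows "g ` stickers \<subseteq> stickers"
proof
  fix y
  assume "y \<in> g ` stickers"
  then obtain x where "x \<in> stickers" "y = g x"
    by blast
  moreover from this(1) obtain c k where "c \<in> {1..8}" "k < 3" "x = sticker c k"
    by (rule stickersE)
  moreover have "s c \<in> {1..8}"
    using assms \<open>c \<in> {1..8}\<close> by (auto simp: has_coords_def bij_betw_def)
  ultimately show "y \<in> stickers"
    using assms by (simp add: has_coords_def sticker_in_stickers)
qed

lemma has_coords_inj_on: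
  assumes "has_coords g s t"
  shows "inj_on g stickers"
proof (rule inj_onI)
  have s: "bij_betw s {1..8} {1..8}"
    and g: "\<And>c k. c \<in> {1..8} \<Longrightarrow> k < 3 \<Longrightarrow> g (sticker c k) = sticker (s c) ((k + t c) mod 3)"
    using assms by (auto simp: has_coords_def)
  fix x y
  assume "x \<in> stickers" "y \<in> stickers" and eq: "g x = g y"
  then obtain c k c' k' where ck: "c \<in> {1..8}" "k < 3" "x = sticker c k"
    and ck': "c' \<in> {1..8}" "k' < 3" "y = sticker c' k'"
    by (metis stickersE)
  have gxy: "g x = sticker (s c) ((k + t c) mod 3)" "g y = sticker (s c') ((k' + t c') mod 3)"
    using ck ck' by (simp_all add: g)
  then have "s c = s c'"
    using eq by (simp add: sticker_def)
  then have "c = c'"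
    using s ck ck' by (auto simp: bij_betw_def inj_on_def)
  have "s c \<in> {1..8}"
    using s ck(1) by (rule bij_betw_apply)
  have "corner_cycle (s c) ! ((k + t c) mod 3) = corner_cycle (s c) ! ((k' + t c) mod 3)"
    using eq gxy \<open>c = c'\<close> by (simp add: sticker_def)
  then have "(k + t c) mod 3 = (k' + t c) mod 3"
    using face_index_corner_cycle[OF \<open>s c \<in> {1..8}\<close>] by (metis mod_less_divisor zero_less_numeral)
  then have "k = k'"
    using ck ck' by presburger
  with \<open>c = c'\<close> show "x = y"
    using ck ck' by simp
qed

lemma has_coords_in_Sym:
  assumes "has_coords g s t" "g \<in> extensional stickers"
  shows "g \<in> carrier Sym"
proof -
  have "inj_on g stickers"
    using assms(1) by (rule has_coords_inj_on)
  moreover from this have "g ` stickers = stickers"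
    using has_coords_image[OF assms(1)] finite_stickers by (simp add: card_image card_subset_eq)
  ultimately show ?thesis
    using assms(2) by (simp add: BijGroup_def Bij_def bij_betw_def)
qed

definition corner_perm :: "nat list \<Rightarrow> nat \<Rightarrow> nat" where
  "corner_perm xs c = xs ! (c - 1)"

lemma distinct_set_eq_atLeastAtMost:
  "distinct xs \<Longrightarrow> length xs = n \<Longrightarrow> set xs \<subseteq> {1..n} \<Longrightarrow> set xs = {1..n}"
  by (simp add: card_subset_eq distinct_card)

lemma bij_corner_perm:
  assumes "distinct xs" "length xs = n" "set xs \<subseteq> {1..n}"
  shows "bij_betw (corner_perm xs) {1..n} {1..n}"
proof -
  have "set xs = {1..n}"
    using assms by (rule distinct_set_eq_atLeastAtMost)
  then have "bij_betw ((!) xs) {..<n} {1..n}"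
    using assms(1,2) by (intro bij_betw_nth) simp_all
  moreover have "bij_betw (\<lambda>c. c - 1) {1..n} {..<n}"
    by (rule bij_betw_byWitness[where f' = Suc]) auto
  ultimately have "bij_betw ((!) xs \<circ> (\<lambda>c. c - 1)) {1..n} {1..n}"
    by (intro bij_betw_trans)
  then show ?thesis
    by (simp add: corner_perm_def[abs_def] comp_def)
qed

definition move_corners :: "face \<Rightarrow> nat \<Rightarrow> nat" where
  "move_corners Y = corner_perm (case Y of
      Up \<Rightarrow> [3,1,4,2,5,6,7,8] | Dn \<Rightarrow> [1,2,3,4,6,8,5,7]
    | Fr \<Rightarrow> [2,6,3,4,1,5,7,8] | Bk \<Rightarrow> [1,2,7,3,5,6,8,4]
    | Lf \<Rightarrow> [5,2,1,4,7,6,3,8] | Rt \<Rightarrow> [1,4,3,8,5,2,7,6])"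

definition move_twist :: "face \<Rightarrow> nat \<Rightarrow> nat" where
  "move_twist Y = corner_perm (case Y of
      Up \<Rightarrow> [0,0,0,0,0,0,0,0] | Dn \<Rightarrow> [0,0,0,0,0,0,0,0]
    | Fr \<Rightarrow> [2,1,0,0,1,2,0,0] | Bk \<Rightarrow> [0,0,1,2,0,0,2,1]
    | Lf \<Rightarrow> [1,0,2,0,2,0,1,0] | Rt \<Rightarrow> [0,2,0,1,0,1,0,2])"

lemma bij_move_corners: "bij_betw (move_corners Y) {1..8} {1..8}"
  unfolding move_corners_def by (cases Y; simp only: face.case; rule bij_corner_perm; simp)

lemma move_sticker:
  "\<forall>c\<in>{1..8}. \<forall>k<3. move Y (sticker c k) = sticker (move_corners Y c) ((k + move_twist Y c) mod 3)"
  unfolding Ball_corners All_less_3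
  by (cases Y) (simp_all add: move_def sticker_def corner_cycle_def stickers_def corner_of_def
      set_eq_iff All_face move_corners_def move_twist_def corner_perm_def)

lemma has_coords_move: "has_coords (move Y) (move_corners Y) (move_twist Y)"
  using bij_move_corners move_sticker by (simp add: has_coords_def)

lemma sum_corners: "(\<Sum>c\<in>{1..8::nat}. f c) = f 1 + f 2 + f 3 + f 4 + f 5 + f 6 + f 7 + f 8"
  by (simp add: eval_nat_numeral atLeastAtMostSuc_conv add_ac)

lemma sum_move_twist: "(\<Sum>c\<in>{1..8}. move_twist Y c) mod 3 = 0"
  unfolding sum_corners by (cases Y) (simp_all add: move_twist_def corner_perm_def)

lemma move_in_Sym: "move Y \<in> carrier Sym"
  using has_coords_move by (rule has_coords_in_Sym) (simp add: move_def)

section \<open>The group \<open>G\<^sub>2\<close> and its twists\<close>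

lemma G2_group: "group G2"
  by (simp add: G2_def group.group_subgroup_generated[OF group_BijGroup])

lemma carrier_G2: "carrier G2 = generate Sym (carrier Sym \<inter> range move)"
  by (simp add: G2_def carrier_subgroup_generated)

lemma carrier_G2_subset: "carrier G2 \<subseteq> carrier Sym"
  unfolding G2_def by (rule group.carrier_subgroup_generated_subset[OF group_BijGroup])

lemma mult_G2: "monoid.mult G2 = monoid.mult Sym"
  by (simp add: G2_def)

lemma one_G2: "\<one>\<^bsub>G2\<^esub> = \<one>\<^bsub>Sym\<^esub>"
  by (simp add: G2_def)

lemma inv_G2: "g \<in> carrier G2 \<Longrightarrow> inv\<^bsub>G2\<^esub> g = inv\<^bsub>Sym\<^esub> g"
  unfolding G2_def by (rule group.inv_subgroup_generated[OF group_BijGroup]) (simp add: G2_def)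

lemma move_in_G2: "move Y \<in> carrier G2"
  by (simp add: carrier_G2 generate.incl move_in_Sym)

definition has_balanced_coords :: "(nat \<times> face \<Rightarrow> nat \<times> face) \<Rightarrow> bool" where
  "has_balanced_coords g \<longleftrightarrow> (\<exists>s t. has_coords g s t \<and> (\<Sum>c\<in>{1..8}. t c) mod 3 = 0)"

lemma has_balanced_coords_one: "has_balanced_coords \<one>\<^bsub>Sym\<^esub>"
  using has_coords_one unfolding has_balanced_coords_def by force

lemma has_balanced_coords_move: "has_balanced_coords (move Y)"
  using has_coords_move sum_move_twist unfolding has_balanced_coords_def by blast

lemma has_balanced_coords_mult:
  assumes "g \<in> carrier Sym" "h \<in> carrier Sym" "has_balanced_coords g" "has_balanced_coords h"
  shows "has_balanced_coords (g \<otimes>\<^bsub>Sym\<^esub> h)"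
proof -
  obtain sg tg sh th where g: "has_coords g sg tg" "(\<Sum>c\<in>{1..8}. tg c) mod 3 = 0"
    and h: "has_coords h sh th" "(\<Sum>c\<in>{1..8}. th c) mod 3 = 0"
    using assms(3,4) by (auto simp: has_balanced_coords_def)
  have "bij_betw sh {1..8} {1..8}"
    using h(1) by (simp add: has_coords_def)
  then have "(\<Sum>c\<in>{1..8}. th c + tg (sh c)) = (\<Sum>c\<in>{1..8}. th c) + (\<Sum>c\<in>{1..8}. tg c)"
    by (rule sum_twist_mult)
  then have "(\<Sum>c\<in>{1..8}. th c + tg (sh c)) mod 3 = 0"
    using g(2) h(2) by presburger
  then have "has_coords (g \<otimes>\<^bsub>Sym\<^esub> h) (sg \<circ> sh) (\<lambda>c. th c + tg (sh c)) \<and>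
      (\<Sum>c\<in>{1..8}. th c + tg (sh c)) mod 3 = 0"
    using has_coords_mult[OF g(1) assms(1) h(1) assms(2)] by blast
  then show ?thesis
    unfolding has_balanced_coords_def by (intro exI)
qed

lemma G2_has_balanced_coords: "g \<in> carrier G2 \<Longrightarrow> has_balanced_coords g"
  unfolding carrier_G2
proof (induction rule: generate.induct)
  case one
  show ?case by (rule has_balanced_coords_one)
next
  case (incl h)
  then show ?case using has_balanced_coords_move by blast
next
  case (inv h)
  then obtain Y where "h = move Y" by blast
  then show ?case
    using group.inv_closed_if_mult_closed[where Q = has_balanced_coords, OF group_BijGroup finite_carrier_Sym
        move_in_Sym has_balanced_coords_one has_balanced_coords_move has_balanced_coords_mult] by simp
next
  case (eng h1 h2)
  then have "h1 \<in> carrier Sym" "h2 \<in> carrier Sym"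
    using group.generate_in_carrier[OF group_BijGroup, of "carrier Sym \<inter> range move"] by auto
  then show ?case using eng.IH has_balanced_coords_mult by blast
qed

lemma has_coords_eqI:
  assumes "g \<in> carrier Sym" "g' \<in> carrier Sym" "has_coords g s t" "has_coords g' s' t'"
    and "\<And>c. c \<in> {1..8} \<Longrightarrow> s c = s' c" "\<And>c. c \<in> {1..8} \<Longrightarrow> t c mod 3 = t' c mod 3"
  shows "g = g'"
proof (rule stickers_eqI)
  show "g \<in> extensional stickers" "g' \<in> extensional stickers"
    using assms(1,2) by (simp_all add: BijGroup_def Bij_def)
  fix c k :: nat
  assume c: "c \<in> {1..8}" and k: "k < 3"
  have "(k + t c) mod 3 = (k + t' c) mod 3"
    using assms(6)[OF c] by (metis mod_add_right_eq)
  then show "g (sticker c k) = g' (sticker c k)"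
    using assms(3,4,5) c k by (simp add: has_coords_def)
qed

definition twist :: "(nat \<Rightarrow> nat) \<Rightarrow> nat \<times> face \<Rightarrow> nat \<times> face" where
  "twist t = (\<lambda>x\<in>stickers. sticker (fst x) ((face_index (fst x) (snd x) + t (fst x)) mod 3))"

lemma twist_sticker: "c \<in> {1..8} \<Longrightarrow> k < 3 \<Longrightarrow> twist t (sticker c k) = sticker c ((k + t c) mod 3)"
  by (simp add: twist_def sticker_in_stickers) (simp add: sticker_def face_index_corner_cycle)

lemma has_coords_twist: "has_coords (twist t) id t"
  by (simp add: has_coords_def twist_sticker)

lemma twist_in_Sym: "twist t \<in> carrier Sym"
  using has_coords_twist by (rule has_coords_in_Sym) (simp add: twist_def)

lemma twist_mult: "twist t \<otimes>\<^bsub>Sym\<^esub> twist s = twist (\<lambda>c. s c + t c)"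
proof (rule has_coords_eqI)
  show "has_coords (twist t \<otimes>\<^bsub>Sym\<^esub> twist s) (id \<circ> id) (\<lambda>c. s c + t (id c))"
    by (rule has_coords_mult[OF has_coords_twist twist_in_Sym has_coords_twist twist_in_Sym])
  show "has_coords (twist (\<lambda>c. s c + t c)) id (\<lambda>c. s c + t c)"
    by (rule has_coords_twist)
  show "twist t \<otimes>\<^bsub>Sym\<^esub> twist s \<in> carrier Sym"
    by (simp add: group.is_monoid[OF group_BijGroup] monoid.m_closed twist_in_Sym)
qed (simp_all add: twist_in_Sym)

lemma twist_mod3_cong: "(\<And>c. c \<in> {1..8} \<Longrightarrow> t c mod 3 = s c mod 3) \<Longrightarrow> twist t = twist s"
  by (rule has_coords_eqI[OF twist_in_Sym twist_in_Sym has_coords_twist has_coords_twist]) simp_all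

lemma twist_zero: "twist (\<lambda>_. 0) = \<one>\<^bsub>Sym\<^esub>"
  by (rule has_coords_eqI[OF twist_in_Sym _ has_coords_twist has_coords_one])
    (simp_all add: monoid.one_closed[OF group.is_monoid[OF group_BijGroup]])

lemma twist_conj:
  assumes g: "g \<in> carrier Sym" "has_coords g s \<tau>"
    and t': "\<And>c. c \<in> {1..8} \<Longrightarrow> t' (s c) mod 3 = t c mod 3"
  shows "g \<otimes>\<^bsub>Sym\<^esub> twist t = twist t' \<otimes>\<^bsub>Sym\<^esub> g"
proof (rule has_coords_eqI)
  interpret Sym: group Sym by (rule group_BijGroup)
  show "g \<otimes>\<^bsub>Sym\<^esub> twist t \<in> carrier Sym" "twist t' \<otimes>\<^bsub>Sym\<^esub> g \<in> carrier Sym"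
    using g(1) twist_in_Sym by simp_all
  show "has_coords (g \<otimes>\<^bsub>Sym\<^esub> twist t) (s \<circ> id) (\<lambda>c. t c + \<tau> (id c))"
    by (rule has_coords_mult[OF g(2,1) has_coords_twist twist_in_Sym])
  show "has_coords (twist t' \<otimes>\<^bsub>Sym\<^esub> g) (id \<circ> s) (\<lambda>c. \<tau> c + t' (s c))"
    by (rule has_coords_mult[OF has_coords_twist twist_in_Sym g(2,1)])
  fix c :: nat
  assume "c \<in> {1..8}"
  then show "(\<lambda>c. t c + \<tau> (id c)) c mod 3 = (\<lambda>c. \<tau> c + t' (s c)) c mod 3"
    using t'[of c] by simp presburger
qed simp

lemma normal_twist_conj:
  assumes N: "N \<lhd> G2" and g: "g \<in> carrier G2" "has_coords g s \<tau>"
    and t: "twist t \<in> N" and t': "\<And>c. c \<in> {1..8} \<Longrightarrow> t' (s c) mod 3 = t c mod 3"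
  shows "twist t' \<in> N"
proof -
  interpret Sym: group Sym by (rule group_BijGroup)
  have gS: "g \<in> carrier Sym"
    using g(1) carrier_G2_subset by blast
  have "g \<otimes>\<^bsub>Sym\<^esub> twist t = twist t' \<otimes>\<^bsub>Sym\<^esub> g"
    using gS g(2) t' by (rule twist_conj)
  then have "g \<otimes>\<^bsub>Sym\<^esub> twist t \<otimes>\<^bsub>Sym\<^esub> inv\<^bsub>Sym\<^esub> g = twist t'"
    using gS twist_in_Sym by (simp add: Sym.m_assoc)
  moreover have "g \<otimes>\<^bsub>G2\<^esub> twist t \<otimes>\<^bsub>G2\<^esub> inv\<^bsub>G2\<^esub> g \<in> N"
    using normal.inv_op_closed2[OF N g(1) t] .
  ultimately show ?thesis
    by (simp add: mult_G2 inv_G2[OF g(1)])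
qed

lemma K_twistE:
  assumes "k \<in> K"
  obtains t where "k = twist t" "(\<Sum>c\<in>{1..8}. t c) mod 3 = 0"
proof -
  have k: "k \<in> carrier G2" "phi k = \<one>\<^bsub>S8\<^esub>"
    using assms by (auto simp: K_def kernel_def)
  obtain s t where st: "has_coords k s t" "(\<Sum>c\<in>{1..8}. t c) mod 3 = 0"
    using G2_has_balanced_coords[OF k(1)] by (auto simp: has_balanced_coords_def)
  have s_id: "s c = id c" if c: "c \<in> {1..8}" for c
  proof -
    have "k (sticker c 0) = sticker (s c) (t c mod 3)"
      using st(1) c by (simp add: has_coords_def)
    moreover have "sticker c 0 = (c, ud c)"
      using corner_cycle(3)[OF c] by (simp add: sticker_def)
    moreover have "phi k c = c"
      using k(2) c by (simp add: S8_def BijGroup_def)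
    ultimately show ?thesis
      using c by (simp add: phi_def sticker_def)
  qed
  have "k \<in> carrier Sym"
    using k(1) carrier_G2_subset by (rule rev_subsetD)
  then have "k = twist t"
    by (rule has_coords_eqI[OF _ twist_in_Sym st(1) has_coords_twist]) (simp_all add: s_id)
  from this st(2) show thesis
    by (rule that)
qed

lemma nontrivial_twistE:
  assumes sum: "(\<Sum>c\<in>{1..8}. t c) mod 3 = 0" and nontrivial: "twist t \<noteq> \<one>\<^bsub>Sym\<^esub>"
  obtains a where "a \<in> {1..8}" "t a mod 3 \<noteq> t 1 mod 3"
proof (rule ccontr)
  note witness = that
  assume "\<not> thesis"
  have const: "t c mod 3 = t 1 mod 3" if c: "c \<in> {1..8}" for c
  proof (rule ccontr)
    assume "t c mod 3 \<noteq> t 1 mod 3"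
    with c have thesis
      by (rule witness)
    with \<open>\<not> thesis\<close> show False ..
  qed
  have "(\<Sum>c\<in>{1..8::nat}. t c) mod 3 = (\<Sum>c\<in>{1..8::nat}. t c mod 3) mod 3"
    by (rule mod_sum_eq[symmetric])
  also have "(\<Sum>c\<in>{1..8::nat}. t c mod 3) = (\<Sum>c\<in>{1..8::nat}. t 1 mod 3)"
    using const by (rule sum.cong[OF refl])
  finally have "8 * (t 1 mod 3) mod 3 = 0"
    using sum by simp
  then have "t 1 mod 3 = 0"
    by presburger
  then have "t c mod 3 = 0" if "c \<in> {1..8}" for c
    using const[OF that] by simp
  then have "twist t = twist (\<lambda>_. 0)"
    by (intro twist_mod3_cong) simp
  with nontrivial show False
    by (simp add: twist_zero)
qed

lemma mod3_module_twists:
  assumes "subgroup N G2"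
  shows "mod3_module {1..8} {t. twist t \<in> N}"
proof
  show "(\<lambda>_. 0) \<in> {t. twist t \<in> N}"
    using subgroup.one_closed[OF assms] by (simp add: twist_zero one_G2)
next
  fix t s
  assume "t \<in> {t. twist t \<in> N}" "s \<in> {t. twist t \<in> N}"
  then show "(\<lambda>c. t c + s c) \<in> {t. twist t \<in> N}"
    using subgroup.m_closed[OF assms, of "twist s" "twist t"] by (simp add: mult_G2 twist_mult)
next
  fix t s
  assume t: "t \<in> {t. twist t \<in> N}" and st: "\<And>c. c \<in> {1..8} \<Longrightarrow> s c mod 3 = t c mod 3"
  have "twist s = twist t"
    using st by (rule twist_mod3_cong)
  with t show "s \<in> {t. twist t \<in> N}"
    by simp
qed

definition word :: "face list \<Rightarrow> nat \<times> face \<Rightarrow> nat \<times> face" where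
  "word ys = foldr (\<lambda>Y g. move Y \<otimes>\<^bsub>Sym\<^esub> g) ys \<one>\<^bsub>Sym\<^esub>"

definition word_corners :: "face list \<Rightarrow> nat \<Rightarrow> nat" where
  "word_corners ys = foldr (\<lambda>Y s. move_corners Y \<circ> s) ys id"

lemma word_in_G2: "word ys \<in> carrier G2"
proof (induction ys)
  case Nil
  show ?case using group.is_monoid[OF G2_group] by (simp add: word_def monoid.one_closed flip: one_G2)
next
  case (Cons Y ys)
  then show ?case
    using monoid.m_closed[OF group.is_monoid[OF G2_group] move_in_G2 Cons.IH]
    by (simp add: word_def mult_G2)
qed

lemma has_coords_word: "\<exists>t. has_coords (word ys) (word_corners ys) t"
proof (induction ys)
  case Nil
  have "word [] = \<one>\<^bsub>Sym\<^esub>" "word_corners [] = id"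
    by (simp_all add: word_def word_corners_def)
  then show ?case
    using has_coords_one by metis
next
  case (Cons Y ys)
  then obtain t where "has_coords (word ys) (word_corners ys) t" ..
  moreover have "word ys \<in> carrier Sym"
    using word_in_G2 carrier_G2_subset by blast
  ultimately have "has_coords (move Y \<otimes>\<^bsub>Sym\<^esub> word ys) (move_corners Y \<circ> word_corners ys)
      (\<lambda>c. t c + move_twist Y (word_corners ys c))"
    by (rule has_coords_mult[OF has_coords_move move_in_Sym])
  moreover have "word (Y # ys) = move Y \<otimes>\<^bsub>Sym\<^esub> word ys"
    "word_corners (Y # ys) = move_corners Y \<circ> word_corners ys"
    by (simp_all add: word_def word_corners_def)
  ultimately show ?case
    by metis
qed

text \<open>A Hamiltonian path through the corners along edges of the cube.\<close>

definition corner_path :: "nat list" where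
  "corner_path = [1, 2, 4, 3, 7, 8, 6, 5]"

lemma word_corners_transpositions:
  "\<forall>c\<in>{1..8}. word_corners [Up, Lf, Dn, Rt, Fr] c = transpose 1 2 c"
  "\<forall>c\<in>{1..8}. word_corners [Up, Fr, Dn, Bk, Rt] c = transpose 2 4 c"
  "\<forall>c\<in>{1..8}. word_corners [Up, Lf, Fr, Rt, Bk] c = transpose 4 3 c"
  "\<forall>c\<in>{1..8}. word_corners [Fr, Lf, Dn, Bk, Rt] c = transpose 3 7 c"
  "\<forall>c\<in>{1..8}. word_corners [Up, Fr, Dn, Rt, Bk] c = transpose 7 8 c"
  "\<forall>c\<in>{1..8}. word_corners [Up, Lf, Dn, Fr, Rt] c = transpose 8 6 c"
  "\<forall>c\<in>{1..8}. word_corners [Up, Fr, Rt, Dn, Bk] c = transpose 6 5 c"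
  unfolding Ball_corners
  by (simp_all add: word_corners_def move_corners_def corner_perm_def transpose_def)

lemma adjacent_transposition_word:
  assumes "(a, b) \<in> set (zip corner_path (tl corner_path))"
  obtains ys where "\<forall>c\<in>{1..8}. word_corners ys c = transpose a b c"
  using assms that word_corners_transpositions unfolding corner_path_def by auto

lemma normal_twist_transpose:
  assumes N: "N \<lhd> G2" and ab: "(a, b) \<in> set (zip corner_path (tl corner_path))"
    and t: "twist t \<in> N"
  shows "twist (t \<circ> transpose a b) \<in> N"
proof -
  obtain ys where ys: "\<forall>c\<in>{1..8}. word_corners ys c = transpose a b c"
    using ab by (rule adjacent_transposition_word)
  obtain \<tau> where "has_coords (word ys) (word_corners ys) \<tau>"
    using has_coords_word by blast
  then show ?thesis
    by (rule normal_twist_conj[OF N word_in_G2 _ t]) (simp add: ys)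
qed

lemma distinct_corner_path: "distinct corner_path"
  by (simp add: corner_path_def)

lemma set_corner_path: "set corner_path = {1..8}"
  using distinct_corner_path by (rule distinct_set_eq_atLeastAtMost) (simp_all add: corner_path_def)

lemma subset_K_if_phi_trivial:
  assumes "subgroup N G2" "phi ` N = {\<one>\<^bsub>S8\<^esub>}"
  shows "N \<subseteq> K"
proof
  fix n
  assume "n \<in> N"
  then have "phi n = \<one>\<^bsub>S8\<^esub>"
    using assms(2) by (metis imageI singletonD)
  moreover have "n \<in> carrier G2"
    using \<open>n \<in> N\<close> subgroup.subset[OF assms(1)] by (rule rev_subsetD)
  ultimately show "n \<in> K"
    by (simp add: K_def kernel_def)
qed

lemma nonconstant_twist_in_subgroupE:
  assumes "subgroup N G2" "N \<noteq> {\<one>\<^bsub>G2\<^esub>}" "N \<subseteq> K"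
  obtains t a where "twist t \<in> N" "a \<in> {1..8}" "t a mod 3 \<noteq> t 1 mod 3"
proof -
  have "\<not> N \<subseteq> {\<one>\<^bsub>G2\<^esub>}"
    using assms(2) subgroup.one_closed[OF assms(1)] by (auto simp: subset_singleton_iff)
  then have "\<exists>n\<in>N. n \<noteq> \<one>\<^bsub>G2\<^esub>"
    by (auto simp: subset_iff)
  then obtain n where n: "n \<in> N" "n \<noteq> \<one>\<^bsub>G2\<^esub>" ..
  from n(1) assms(3) have "n \<in> K"
    by (rule rev_subsetD)
  then obtain t where t: "n = twist t" "(\<Sum>c\<in>{1..8}. t c) mod 3 = 0"
    by (rule K_twistE)
  have "twist t \<noteq> \<one>\<^bsub>Sym\<^esub>"
    using t(1) n(2) by (simp add: one_G2)
  with t(2) obtain a where "a \<in> {1..8}" "t a mod 3 \<noteq> t 1 mod 3"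
    by (rule nontrivial_twistE)
  with n(1) t(1) show thesis
    using that by simp
qed

lemma sum_zero_twist_mem:
  assumes N: "N \<lhd> G2" and t: "twist t \<in> N" "a \<in> {1..8}" "t a mod 3 \<noteq> t 1 mod 3"
    and s: "(\<Sum>c\<in>{1..8}. s c) mod 3 = 0"
  shows "twist s \<in> N"
proof -
  interpret twists: mod3_module "{1..8}" "{t. twist t \<in> N}"
    using normal_imp_subgroup[OF N] by (rule mod3_module_twists)
  have "s \<in> {t. twist t \<in> N}"
  proof (rule twists.sum_zero_mem_if_nonconstant[where xs = corner_path and t = t and a = a and b = 1])
    show "distinct corner_path" "set corner_path = {1..8}"
      by (rule distinct_corner_path, rule set_corner_path)
    show "u \<circ> transpose x y \<in> {t. twist t \<in> N}"
      if "(x, y) \<in> set (zip corner_path (tl corner_path))" "u \<in> {t. twist t \<in> N}" for x y u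
      using normal_twist_transpose[OF N that(1)] that(2) by simp
  qed (use t s in simp_all)
  then show ?thesis
    by simp
qed

theorem proposition2p7:
  assumes "N \<lhd> G2"
    and "N \<noteq> {\<one>\<^bsub>G2\<^esub>}"
    and "phi ` N = {\<one>\<^bsub>S8\<^esub>}"
  shows "N = K"
proof
  have sub: "subgroup N G2"
    using assms(1) by (rule normal_imp_subgroup)
  then show "N \<subseteq> K"
    using assms(3) by (rule subset_K_if_phi_trivial)
  with sub assms(2) obtain t a where t: "twist t \<in> N" "a \<in> {1..8}" "t a mod 3 \<noteq> t 1 mod 3"
    by (rule nonconstant_twist_in_subgroupE)
  show "K \<subseteq> N"
  proof
    fix k
    assume "k \<in> K"
    then obtain s where "k = twist s" "(\<Sum>c\<in>{1..8}. s c) mod 3 = 0"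
      by (rule K_twistE)
    with sum_zero_twist_mem[OF assms(1) t] show "k \<in> N"
      by simp
  qed
qed

end
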